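(* Let $T$ be an MFQST with explicit bound $k$ on $n$ sources $z_1,\dots,z_n$ and sink $z_{BS}$. Then $$L(T)\ge\frac{1}{n+k+1}\sum_{i=1}^n|z_iz_{BS}|^2.$$
   Context: Let $Z=\{z_1,\dots,z_n\}\subset\mathbb{R}^2$ ($n\ge 1$) be a set of sources and $z_{BS}\in\mathbb{R}^2\setminus Z$ a sink; each source has supply $1$. A flow-dependent quadratic Steiner tree (FQST) consists of a finite set $S\subset\mathbb{R}^2$ of Steiner points and a tree $T$ with vertex set $Z\cup S\cup\{z_{BS}\}$ whose edges are directed towards $z_{BS}$. Every node other than the sink has exactly one out-edge, and the sink has none. Each edge $e$ carries a positive flow $f(e)$ such that: - at each source, the flow on its out-edge minus the total flow on its in-edges equals $1$; - at each Steiner point, the out-flow equals the total in-flow; - the sink receives total flow $n$. The cost is $L(T)=\sum_{e\in E(T)} f(e)|e|^2$. An MFQST with explicit bound $k$ minimises $L$ among all FQSTs with $|S|\le k$. *)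

theory Defs
  imports "HOL-Analysis.Analysis"
begin

type_synonym pt = "real^2"

text \<open>The tree is given by the successor map p: every vertex v other than the sink
  has the unique out-edge (v, p v); f v is the flow on that out-edge.
  Acyclicity / connectivity: iterating p from any vertex reaches the sink.\<close>

definition in_edges :: "pt set \<Rightarrow> pt \<Rightarrow> pt set \<Rightarrow> (pt \<Rightarrow> pt) \<Rightarrow> pt \<Rightarrow> pt set" where
  "in_edges Z zbs S p w = {u \<in> Z \<union> S. p u = w}"

definition is_FQST :: "pt set \<Rightarrow> pt \<Rightarrow> pt set \<Rightarrow> (pt \<Rightarrow> pt) \<Rightarrow> (pt \<Rightarrow> real) \<Rightarrow> bool" where
  "is_FQST Z zbs S p f \<longleftrightarrow>
     finite S \<and> S \<inter> Z = {} \<and> zbs \<notin> S \<and>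
     (\<forall>v \<in> Z \<union> S. p v \<in> Z \<union> S \<union> {zbs} \<and> f v > 0) \<and>
     (\<forall>v \<in> Z \<union> S \<union> {zbs}. \<exists>m. (p ^^ m) v = zbs) \<and>
     (\<forall>z \<in> Z. f z - (\<Sum>u \<in> in_edges Z zbs S p z. f u) = 1) \<and>
     (\<forall>s \<in> S. f s = (\<Sum>u \<in> in_edges Z zbs S p s. f u)) \<and>
     (\<Sum>u \<in> in_edges Z zbs S p zbs. f u) = real (card Z)"

definition FQST_cost :: "pt set \<Rightarrow> pt set \<Rightarrow> (pt \<Rightarrow> pt) \<Rightarrow> (pt \<Rightarrow> real) \<Rightarrow> real" where
  "FQST_cost Z S p f = (\<Sum>v \<in> Z \<union> S. f v * (dist v (p v))\<^sup>2)"

definition is_MFQST :: "pt set \<Rightarrow> pt \<Rightarrow> nat \<Rightarrow> pt set \<Rightarrow> (pt \<Rightarrow> pt) \<Rightarrow> (pt \<Rightarrow> real) \<Rightarrow> bool" where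
  "is_MFQST Z zbs k S p f \<longleftrightarrow>
     is_FQST Z zbs S p f \<and> card S \<le> k \<and>
     (\<forall>S' p' f'. is_FQST Z zbs S' p' f' \<and> card S' \<le> k \<longrightarrow>
        FQST_cost Z S p f \<le> FQST_cost Z S' p' f')"

end

theory Submission
  imports Defs
begin

(* Let depth z be the number of edges on the
   path from a source z to the sink and call a source z "upstream" of v if v lies on that path.
   (1) Flow conservation with unit supplies forces f v \<ge> #(sources upstream of v).
   (2) Exchanging the order of summation, \<Sum>v #upstream(v) * c v equals the sum over all
       sources of the c-weights along their sink paths.
   (3) By the triangle inequality and Cauchy-Schwarz, the squared edge lengths along the path
       of z sum to at least |z zbs|\<^sup>2 / depth z.
   (4) Paths visit distinct vertices of V, so depth z \<le> |V| \<le> n + k < n + k + 1.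
   The file first develops (1), (2), (4) in a locale for finite rooted successor structures,
   proves (3) for arbitrary chains in a metric space, and combines everything at the end. *)

locale rooted_tree =
  fixes V :: "'a set" and root :: 'a and p :: "'a \<Rightarrow> 'a"
  assumes finite_V: "finite V"
    and root_notin: "root \<notin> V"
    and p_closed: "\<And>v. v \<in> V \<Longrightarrow> p v \<in> V \<union> {root}"
    and reaches_root: "\<And>v. v \<in> V \<Longrightarrow> \<exists>m. (p ^^ m) v = root"
begin

definition depth :: "'a \<Rightarrow> nat" where
  "depth v = (LEAST m. (p ^^ m) v = root)"

lemma depth_reaches_root: assumes "v \<in> V" shows "(p ^^ depth v) v = root"
proof -
  obtain m where "(p ^^ m) v = root" using reaches_root[OF assms] by blast
  then show ?thesis unfolding depth_def by (rule LeastI)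
qed

lemma before_depth_not_root: "i < depth v \<Longrightarrow> (p ^^ i) v \<noteq> root"
  unfolding depth_def using not_less_Least by blast

lemma path_in_V: "v \<in> V \<Longrightarrow> i < depth v \<Longrightarrow> (p ^^ i) v \<in> V"
proof (induction i)
  case 0
  then show ?case by simp
next
  case (Suc i)
  then have "p ((p ^^ i) v) \<in> V \<union> {root}" using p_closed by simp
  moreover have "(p ^^ Suc i) v \<noteq> root" using before_depth_not_root Suc.prems by blast
  ultimately show ?case by simp
qed

text \<open>Paths are simple: a repeated vertex would make the path cycle without reaching the root.\<close>

lemma path_inj: assumes v: "v \<in> V" shows "inj_on (\<lambda>i. (p ^^ i) v) {..<depth v}"
proof -
  have no_repeat: "(p ^^ i) v \<noteq> (p ^^ j) v" if ij: "i < j" "j < depth v" for i j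
  proof
    assume eq: "(p ^^ i) v = (p ^^ j) v"
    have "(p ^^ (depth v - j + i)) v = (p ^^ (depth v - j)) ((p ^^ i) v)"
      by (simp add: funpow_add)
    also have "\<dots> = (p ^^ (depth v - j + j)) v" by (simp add: eq funpow_add)
    also have "\<dots> = root" using depth_reaches_root v ij by simp
    finally have "(p ^^ (depth v - j + i)) v = root" .
    moreover have "depth v - j + i < depth v" using ij by simp
    ultimately show False using before_depth_not_root by blast
  qed
  show ?thesis
    by (rule inj_onI) (metis lessThan_iff linorder_neqE_nat no_repeat)
qed

lemma depth_le_card: "v \<in> V \<Longrightarrow> depth v \<le> card V"
  using card_image[OF path_inj, of v] path_in_V finite_V
  by (metis (no_types, lifting) card_lessThan card_mono image_subsetI lessThan_iff)

lemma depth_successor: assumes u: "u \<in> V" shows "depth u = Suc (depth (p u))"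
proof -
  have "depth u \<noteq> 0"
    using depth_reaches_root[OF u] u root_notin by (metis funpow_0)
  then obtain m where m: "depth u = Suc m" using not0_implies_Suc by blast
  have "(p ^^ m) (p u) = root"
    using depth_reaches_root[OF u] m by (simp add: funpow_Suc_right del: funpow.simps)
  then have "depth (p u) \<le> m" unfolding depth_def by (rule Least_le)
  moreover have "(p ^^ depth (p u)) (p u) = root"
    using p_closed[OF u] depth_reaches_root by (cases "p u = root") (auto simp: depth_def)
  then have "depth u \<le> Suc (depth (p u))"
    unfolding depth_def by (intro Least_le) (simp add: funpow_Suc_right del: funpow.simps)
  ultimately show ?thesis using m by simp
qed

definition upstream :: "'a set \<Rightarrow> 'a \<Rightarrow> 'a set" where
  "upstream Z v = {z \<in> Z. \<exists>i<depth z. (p ^^ i) z = v}"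

lemma upstream_split:
  assumes ZV: "Z \<subseteq> V"
  shows "upstream Z v \<subseteq> ({v} \<inter> Z) \<union> (\<Union>u\<in>{u \<in> V. p u = v}. upstream Z u)"
proof
  fix z assume "z \<in> upstream Z v"
  then obtain i where z: "z \<in> Z" "i < depth z" "(p ^^ i) z = v"
    unfolding upstream_def by blast
  show "z \<in> ({v} \<inter> Z) \<union> (\<Union>u\<in>{u \<in> V. p u = v}. upstream Z u)"
  proof (cases i)
    case 0
    then show ?thesis using z by simp
  next
    case (Suc j)
    then have "z \<in> upstream Z ((p ^^ j) z)"
      using z unfolding upstream_def by (intro CollectI conjI exI[of _ j]) auto
    moreover have "(p ^^ j) z \<in> V" using path_in_V z Suc ZV by auto
    ultimately show ?thesis using z Suc unfolding upstream_def by auto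
  qed
qed

text \<open>Induction runs
  from the leaves down, i.e. on card V - depth v.\<close>

lemma flow_ge_upstream:
  fixes f :: "'a \<Rightarrow> real"
  assumes ZV: "Z \<subseteq> V"
    and conservation: "\<And>v. v \<in> V \<Longrightarrow>
          f v \<ge> (if v \<in> Z then 1 else 0) + (\<Sum>u\<in>{u \<in> V. p u = v}. f u)"
  shows "v \<in> V \<Longrightarrow> real (card (upstream Z v)) \<le> f v"
proof (induction "card V - depth v" arbitrary: v rule: less_induct)
  case less
  let ?C = "{u \<in> V. p u = v}"
  have finite_C: "finite ?C" using finite_V by simp
  have finite_up: "finite (upstream Z u)" for u
    using finite_subset[OF ZV finite_V] unfolding upstream_def by simp
  have IH: "real (card (upstream Z u)) \<le> f u" if u: "u \<in> ?C" for u
  proof -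
    have "depth u = Suc (depth v)" using depth_successor u by auto
    moreover have "depth u \<le> card V" using depth_le_card u by auto
    ultimately show ?thesis using less.hyps u by simp
  qed
  have "card (upstream Z v) \<le> card (({v} \<inter> Z) \<union> (\<Union>u\<in>?C. upstream Z u))"
    using upstream_split[OF ZV] finite_C finite_up by (intro card_mono) auto
  also have "\<dots> \<le> card ({v} \<inter> Z) + (\<Sum>u\<in>?C. card (upstream Z u))"
    using card_Un_le[of "{v} \<inter> Z"] card_UN_le[OF finite_C, of "upstream Z"]
    by (meson add_left_mono le_trans)
  finally have "real (card (upstream Z v))
      \<le> (if v \<in> Z then 1 else 0) + (\<Sum>u\<in>?C. real (card (upstream Z u)))"
    by (cases "v \<in> Z") (simp_all flip: of_nat_sum)
  also have "\<dots> \<le> (if v \<in> Z then 1 else 0) + (\<Sum>u\<in>?C. f u)"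
    using sum_mono[of ?C "\<lambda>u. real (card (upstream Z u))" f] IH by simp
  also have "\<dots> \<le> f v" using conservation less.prems by blast
  finally show ?case .
qed

lemma upstream_weight_sum:
  fixes c :: "'a \<Rightarrow> real"
  assumes ZV: "Z \<subseteq> V"
  shows "(\<Sum>v\<in>V. real (card (upstream Z v)) * c v) = (\<Sum>z\<in>Z. \<Sum>i<depth z. c ((p ^^ i) z))"
proof -
  have finite_Z: "finite Z" using finite_subset[OF ZV finite_V] .
  have "(\<Sum>v\<in>V. real (card (upstream Z v)) * c v)
      = (\<Sum>v\<in>V. \<Sum>z\<in>Z. if z \<in> upstream Z v then c v else 0)"
    using finite_Z by (simp add: sum.If_cases upstream_def Int_def)
  also have "\<dots> = (\<Sum>z\<in>Z. \<Sum>v\<in>V. if z \<in> upstream Z v then c v else 0)"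
    by (rule sum.swap)
  also have "\<dots> = (\<Sum>z\<in>Z. \<Sum>i<depth z. c ((p ^^ i) z))"
  proof (rule sum.cong[OF refl])
    fix z assume z: "z \<in> Z"
    have path: "{v \<in> V. z \<in> upstream Z v} = (\<lambda>i. (p ^^ i) z) ` {..<depth z}"
      unfolding upstream_def using z ZV path_in_V by auto
    have "(\<Sum>v\<in>V. if z \<in> upstream Z v then c v else 0) = (\<Sum>v\<in>{v \<in> V. z \<in> upstream Z v}. c v)"
      using finite_V by (simp add: sum.If_cases Int_def)
    also have "\<dots> = (\<Sum>i<depth z. c ((p ^^ i) z))"
      unfolding path using sum.reindex[OF path_inj] z ZV by auto
    finally show "(\<Sum>v\<in>V. if z \<in> upstream Z v then c v else 0) = (\<Sum>i<depth z. c ((p ^^ i) z))" .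
  qed
  finally show ?thesis .
qed

end

lemma chain_dist_squared_le:
  fixes x :: "nat \<Rightarrow> 'a::metric_space"
  shows "(dist (x 0) (x m))\<^sup>2 \<le> real m * (\<Sum>i<m. (dist (x i) (x (Suc i)))\<^sup>2)"
proof -
  have triangle: "dist (x 0) (x m) \<le> (\<Sum>i<m. dist (x i) (x (Suc i)))"
  proof (induction m)
    case 0
    then show ?case by simp
  next
    case (Suc m)
    then show ?case using dist_triangle[of "x 0" "x (Suc m)" "x m"] by (simp add: dist_commute)
  qed
  have "(dist (x 0) (x m))\<^sup>2 \<le> (\<Sum>i<m. dist (x i) (x (Suc i)))\<^sup>2"
    using triangle by (intro power_mono) auto
  also have "\<dots> \<le> (\<Sum>i<m. (dist (x i) (x (Suc i)))\<^sup>2) * real (card {..<m})"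
    by (rule sum_squared_le_sum_of_squares)
  finally show ?thesis by (simp add: mult.commute)
qed

lemma FQST_rooted_tree:
  assumes "is_FQST Z zbs S p f" and "finite Z" and "zbs \<notin> Z"
  shows "rooted_tree (Z \<union> S) zbs p"
  using assms unfolding is_FQST_def by unfold_locales auto

lemma FQST_conservation:
  assumes "is_FQST Z zbs S p f" and "v \<in> Z \<union> S"
  shows "f v \<ge> (if v \<in> Z then 1 else 0) + (\<Sum>u\<in>{u \<in> Z \<union> S. p u = v}. f u)"
  using assms unfolding is_FQST_def in_edges_def by (cases "v \<in> Z") auto

theorem mainTheorem15:
  fixes Z :: "(real^2) set" and zbs :: "real^2" and k :: nat
    and S :: "(real^2) set" and p :: "real^2 \<Rightarrow> real^2" and f :: "real^2 \<Rightarrow> real"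
  assumes "finite Z" and "card Z \<ge> 1" and "zbs \<notin> Z"
    and "is_MFQST Z zbs k S p f"
  shows "FQST_cost Z S p f \<ge> (1 / real (card Z + k + 1)) * (\<Sum>z \<in> Z. (dist z zbs)\<^sup>2)"
proof -
  let ?V = "Z \<union> S" and ?N = "real (card Z + k + 1)"
  have T: "is_FQST Z zbs S p f" and card_S: "card S \<le> k"
    using assms(4) unfolding is_MFQST_def by auto
  interpret rooted_tree ?V zbs p using FQST_rooted_tree[OF T assms(1,3)] .
  define c where "c v = (dist v (p v))\<^sup>2" for v
  have path_cost: "(dist z zbs)\<^sup>2 / ?N \<le> (\<Sum>i<depth z. c ((p ^^ i) z))" if z: "z \<in> Z" for z
  proof -
    have depth_le_N: "real (depth z) \<le> ?N"
      using depth_le_card[of z] card_Un_le[of Z S] card_S z by simp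
    have "(dist z zbs)\<^sup>2 \<le> real (depth z) * (\<Sum>i<depth z. c ((p ^^ i) z))"
      using chain_dist_squared_le[of "\<lambda>i. (p ^^ i) z" "depth z"] depth_reaches_root[of z] z
      by (simp add: c_def)
    also have "\<dots> \<le> ?N * (\<Sum>i<depth z. c ((p ^^ i) z))"
      using depth_le_N by (rule mult_right_mono) (simp add: c_def sum_nonneg)
    finally show ?thesis by (simp add: pos_divide_le_eq mult.commute)
  qed
  have "(1 / ?N) * (\<Sum>z\<in>Z. (dist z zbs)\<^sup>2) = (\<Sum>z\<in>Z. (dist z zbs)\<^sup>2 / ?N)"
    by (simp add: sum_divide_distrib)
  also have "\<dots> \<le> (\<Sum>z\<in>Z. \<Sum>i<depth z. c ((p ^^ i) z))"
    using path_cost by (rule sum_mono)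
  also have "\<dots> = (\<Sum>v\<in>?V. real (card (upstream Z v)) * c v)"
    by (rule upstream_weight_sum[symmetric]) simp
  also have "\<dots> \<le> (\<Sum>v\<in>?V. f v * c v)"
    using flow_ge_upstream[of Z f] FQST_conservation[OF T]
    by (intro sum_mono mult_right_mono) (auto simp: c_def)
  also have "\<dots> = FQST_cost Z S p f"
    by (simp add: FQST_cost_def c_def)
  finally show ?thesis .
qed

end
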